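(* Let $\mathbf A$ be a pseudo-Kleene lattice. Then $\mathbf A$ is super-paraorthomodular if and only if, for all $x,y\in A$ with $x\leq y$, the elements $\pi_{0_{x,y}}(x)$ and $\pi_{0_{x,y}}(y)$ generate a Boolean subalgebra of $\mathbf{Local}(x,y)$.
   Context: A pseudo-Kleene lattice is an algebra $(A,\land,\lor,{}',0,1)$ that is a bounded lattice with an antitone involution ${}'$ ($x\leq y\Rightarrow y'\leq x'$, $x''=x$) satisfying $x\land x'\leq y\lor y'$. It is super-paraorthomodular if for all $x,y$: (SP1) $x\leq y$ and $x'\land y=(x\land x')\lor(y\land y')$ imply $y\land(x\lor x')=x\lor(y\land y')$; (SP2) $x\leq y$ implies $(x\land x')\lor(y\land y')=(x'\land y)\land(x'\land y)'$. For $x,y\in A$: $0_{x,y}=(x\land x')\lor(y\land y')$, $1_{x,y}=(x\lor x')\land(y\lor y')$, and $\pi_z(w)=(w\land(z\lor z'))\lor(z\land z')$. $\mathbf{Local}(x,y)$ is the pseudo-Kleene lattice on the interval $[0_{x,y},1_{x,y}]$ with $\land,\lor,{}'$ inherited from $\mathbf A$ and bounds $0_{x,y},1_{x,y}$. A Boolean subalgebra of $\mathbf{Local}(x,y)$ is a subalgebra (closed under $\land,\lor,{}'$, containing $0_{x,y},1_{x,y}$) that is a distributive lattice in which $u\land u'=0_{x,y}$ for all its elements $u$. *)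

theory Defs
  imports Main
begin

definition pseudo_kleene :: "('a::bounded_lattice \<Rightarrow> 'a) \<Rightarrow> bool" where
  "pseudo_kleene c \<longleftrightarrow>
     (\<forall>x y. x \<le> y \<longrightarrow> c y \<le> c x) \<and>
     (\<forall>x. c (c x) = x) \<and>
     (\<forall>x y. inf x (c x) \<le> sup y (c y))"

definition zero_xy :: "('a::bounded_lattice \<Rightarrow> 'a) \<Rightarrow> 'a \<Rightarrow> 'a \<Rightarrow> 'a" where
  "zero_xy c x y = sup (inf x (c x)) (inf y (c y))"

definition one_xy :: "('a::bounded_lattice \<Rightarrow> 'a) \<Rightarrow> 'a \<Rightarrow> 'a \<Rightarrow> 'a" where
  "one_xy c x y = inf (sup x (c x)) (sup y (c y))"

definition proj :: "('a::bounded_lattice \<Rightarrow> 'a) \<Rightarrow> 'a \<Rightarrow> 'a \<Rightarrow> 'a" where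
  "proj c z w = sup (inf w (sup z (c z))) (inf z (c z))"

definition super_paraorthomodular :: "('a::bounded_lattice \<Rightarrow> 'a) \<Rightarrow> bool" where
  "super_paraorthomodular c \<longleftrightarrow>
     (\<forall>x y. x \<le> y \<and> inf (c x) y = sup (inf x (c x)) (inf y (c y)) \<longrightarrow>
        inf y (sup x (c x)) = sup x (inf y (c y))) \<and>
     (\<forall>x y. x \<le> y \<longrightarrow>
        sup (inf x (c x)) (inf y (c y)) = inf (inf (c x) y) (c (inf (c x) y)))"

definition local_carrier :: "('a::bounded_lattice \<Rightarrow> 'a) \<Rightarrow> 'a \<Rightarrow> 'a \<Rightarrow> 'a set" where
  "local_carrier c x y = {u. zero_xy c x y \<le> u \<and> u \<le> one_xy c x y}"

inductive_set local_gen :: "('a::bounded_lattice \<Rightarrow> 'a) \<Rightarrow> 'a \<Rightarrow> 'a \<Rightarrow> 'a set \<Rightarrow> 'a set"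
  for c :: "'a \<Rightarrow> 'a" and x y :: 'a and G :: "'a set" where
  gen: "g \<in> G \<Longrightarrow> g \<in> local_gen c x y G"
| bot: "zero_xy c x y \<in> local_gen c x y G"
| top: "one_xy c x y \<in> local_gen c x y G"
| inf: "u \<in> local_gen c x y G \<Longrightarrow> v \<in> local_gen c x y G \<Longrightarrow> inf u v \<in> local_gen c x y G"
| sup: "u \<in> local_gen c x y G \<Longrightarrow> v \<in> local_gen c x y G \<Longrightarrow> sup u v \<in> local_gen c x y G"
| cmp: "u \<in> local_gen c x y G \<Longrightarrow> c u \<in> local_gen c x y G"

definition boolean_local_sub :: "('a::bounded_lattice \<Rightarrow> 'a) \<Rightarrow> 'a \<Rightarrow> 'a \<Rightarrow> 'a set \<Rightarrow> bool" where
  "boolean_local_sub c x y S \<longleftrightarrow>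
     S \<subseteq> local_carrier c x y \<and>
     zero_xy c x y \<in> S \<and> one_xy c x y \<in> S \<and>
     (\<forall>u\<in>S. \<forall>v\<in>S. inf u v \<in> S \<and> sup u v \<in> S) \<and> (\<forall>u\<in>S. c u \<in> S) \<and>
     (\<forall>u\<in>S. \<forall>v\<in>S. \<forall>w\<in>S. inf u (sup v w) = sup (inf u v) (inf u w)) \<and>
     (\<forall>u\<in>S. inf u (c u) = zero_xy c x y)"

end

theory Submission imports Defs begin

text \<open>For \<open>x \<le> y\<close> the two projections are \<open>p = x \<squnion> (y \<sqinter> y')\<close> and
\<open>q = y \<sqinter> (x \<squnion> x')\<close>, a chain \<open>0\<^sub>x\<^sub>y \<le> p \<le> q \<le> 1\<^sub>x\<^sub>y\<close>.
Super-paraorthomodularity is exactly what makes \<open>p\<close>, \<open>q \<sqinter> p'\<close> and \<open>q'\<close> three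
disjoint pieces of \<open>1\<^sub>x\<^sub>y\<close>: (SP2) says \<open>0\<^sub>x\<^sub>y = x' \<sqinter> y \<sqinter> (x \<squnion> y')\<close>, which
bounds \<open>p \<sqinter> p'\<close>, \<open>q \<sqinter> q'\<close> and \<open>q \<sqinter> p' \<sqinter> (p \<squnion> q')\<close>, and then (SP1) gives
\<open>p \<squnion> (q \<sqinter> p') = q\<close> and \<open>q' \<squnion> (q \<sqinter> p') = p'\<close>. The eight joins of these pieces form
a Boolean subalgebra containing \<open>p\<close> and \<open>q\<close>, hence also the one they generate.
Conversely, in a Boolean subalgebra containing \<open>p\<close> and \<open>q\<close> the element \<open>q \<sqinter> p'\<close> meets
its complement in \<open>0\<^sub>x\<^sub>y\<close> and lies above \<open>x' \<sqinter> y \<sqinter> (x \<squnion> y')\<close>, which gives (SP2);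
and if \<open>x' \<sqinter> y = 0\<^sub>x\<^sub>y\<close> then \<open>q \<sqinter> p' = 0\<^sub>x\<^sub>y\<close>, so distributivity gives
\<open>q = q \<sqinter> (p \<squnion> p') = p\<close>, which is (SP1).\<close>

lemma local_gen_subset:
  assumes "G \<subseteq> T" "zero_xy c x y \<in> T" "one_xy c x y \<in> T"
    and "\<And>u v. u \<in> T \<Longrightarrow> v \<in> T \<Longrightarrow> inf u v \<in> T"
    and "\<And>u v. u \<in> T \<Longrightarrow> v \<in> T \<Longrightarrow> sup u v \<in> T"
    and "\<And>u. u \<in> T \<Longrightarrow> c u \<in> T"
  shows "local_gen c x y G \<subseteq> T"
proof
  fix u assume "u \<in> local_gen c x y G"
  then show "u \<in> T"
    by (induction rule: local_gen.induct) (use assms in blast)+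
qed

lemma boolean_local_sub_local_genI:
  assumes "local_gen c x y G \<subseteq> T" "T \<subseteq> local_carrier c x y"
    and "\<And>u v w. u \<in> T \<Longrightarrow> v \<in> T \<Longrightarrow> w \<in> T \<Longrightarrow> inf u (sup v w) = sup (inf u v) (inf u w)"
    and "\<And>u. u \<in> T \<Longrightarrow> inf u (c u) = zero_xy c x y"
  shows "boolean_local_sub c x y (local_gen c x y G)"
  unfolding boolean_local_sub_def
  using assms by (blast intro: local_gen.intros)

locale pseudo_kleene_lattice =
  fixes c :: "'a::bounded_lattice \<Rightarrow> 'a"
  assumes pseudo_kleene: "pseudo_kleene c"
begin

lemma c_antitone: "x \<le> y \<Longrightarrow> c y \<le> c x"
  using pseudo_kleene unfolding pseudo_kleene_def by blast

lemma c_involutive [simp]: "c (c x) = x"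
  using pseudo_kleene unfolding pseudo_kleene_def by blast

lemma kleene_inequality: "inf x (c x) \<le> sup y (c y)"
  using pseudo_kleene unfolding pseudo_kleene_def by blast

lemma c_le_c_iff [simp]: "c x \<le> c y \<longleftrightarrow> y \<le> x"
  by (metis c_antitone c_involutive)

lemma c_sup [simp]: "c (sup x y) = inf (c x) (c y)"
proof (rule antisym)
  show "c (sup x y) \<le> inf (c x) (c y)"
    by (simp add: c_antitone)
  have "sup x y \<le> c (inf (c x) (c y))"
    by (metis c_le_c_iff c_involutive inf_le1 inf_le2 le_sup_iff)
  then show "inf (c x) (c y) \<le> c (sup x y)"
    by (metis c_le_c_iff c_involutive)
qed

lemma c_inf [simp]: "c (inf x y) = sup (c x) (c y)"
  by (metis c_sup c_involutive)

lemma c_zero_xy [simp]: "c (zero_xy c x y) = one_xy c x y"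
  unfolding zero_xy_def one_xy_def by (simp add: sup_commute)

lemma zero_xy_le_one_xy: "zero_xy c x y \<le> one_xy c x y"
  unfolding zero_xy_def one_xy_def using kleene_inequality by simp

lemma proj_zero_xy: "proj c (zero_xy c x y) w = sup (inf w (one_xy c x y)) (zero_xy c x y)"
  unfolding proj_def using zero_xy_le_one_xy by (simp add: sup_absorb2 inf_absorb1)

lemma proj_zero_xy_left:
  assumes "x \<le> y"
  shows "proj c (zero_xy c x y) x = sup x (inf y (c y))"
proof -
  have "inf x (one_xy c x y) = x"
    using assms unfolding one_xy_def by (simp add: inf_absorb1 le_supI1)
  then show ?thesis
    unfolding proj_zero_xy by (simp add: zero_xy_def sup_assoc [symmetric] sup_absorb1)
qed

lemma proj_zero_xy_right:
  assumes "x \<le> y"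
  shows "proj c (zero_xy c x y) y = inf y (sup x (c x))"
proof -
  have "inf y (one_xy c x y) = inf y (sup x (c x))"
    unfolding one_xy_def by (metis inf.absorb_iff1 inf.assoc inf.commute sup.cobounded1)
  moreover have "zero_xy c x y \<le> inf y (sup x (c x))"
    unfolding zero_xy_def using assms kleene_inequality by (simp add: le_infI1 le_supI1)
  ultimately show ?thesis
    unfolding proj_zero_xy by (simp add: sup_absorb1)
qed

lemma local_projections_chain:
  assumes "x \<le> y"
  shows "zero_xy c x y \<le> sup x (inf y (c y))"
    and "sup x (inf y (c y)) \<le> inf y (sup x (c x))"
    and "inf y (sup x (c x)) \<le> one_xy c x y"
  unfolding zero_xy_def one_xy_def using assms kleene_inequality
  by (simp_all add: le_supI1 le_infI1)

definition splitting_chain :: "'a \<Rightarrow> 'a \<Rightarrow> 'a \<Rightarrow> bool" where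
  "splitting_chain z p q \<longleftrightarrow>
     inf p (c p) = z \<and> inf q (c q) = z \<and>
     sup p (inf q (c p)) = q \<and> sup (c q) (inf q (c p)) = c p"

text \<open>Under \<open>splitting_chain z p q\<close> the elements \<open>p\<close>, \<open>q \<sqinter> p'\<close> and \<open>q'\<close> are
pairwise disjoint with join \<open>c z\<close>; \<open>cube z p q A B C\<close> is the join of those selected
by \<open>A\<close>, \<open>B\<close>, \<open>C\<close>, tabulated so that no distributivity is needed to evaluate it.\<close>

definition cube :: "'a \<Rightarrow> 'a \<Rightarrow> 'a \<Rightarrow> bool \<Rightarrow> bool \<Rightarrow> bool \<Rightarrow> 'a" where
  "cube z p q A B C =
     (if A then (if B then (if C then c z else q) else (if C then sup p (c q) else p))
      else (if B then (if C then c p else inf q (c p)) else (if C then c q else z)))"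

lemma splitting_chain_le:
  assumes "splitting_chain z p q"
  shows "z \<le> p" "p \<le> q" "q \<le> c z"
proof -
  have z: "z = inf p (c p)" "z = inf q (c q)" and pq: "sup p (inf q (c p)) = q"
    using assms unfolding splitting_chain_def by simp_all
  show "z \<le> p" unfolding z(1) by simp
  show "p \<le> q" by (metis pq sup.cobounded1)
  show "q \<le> c z" unfolding z(2) by simp
qed

lemma cube_inf_c:
  assumes "splitting_chain z p q"
  shows cube_inf: "inf (cube z p q A B C) (cube z p q A' B' C') = cube z p q (A \<and> A') (B \<and> B') (C \<and> C')"
    and cube_c: "c (cube z p q A B C) = cube z p q (\<not> A) (\<not> B) (\<not> C)"
proof -
  have pp: "inf p (c p) = z" and qq: "inf q (c q) = z"
    and pq: "sup p (inf q (c p)) = q" and qp: "sup (c q) (inf q (c p)) = c p"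
    using assms unfolding splitting_chain_def by simp_all
  have le: "z \<le> p" "p \<le> q" "q \<le> c z"
    using splitting_chain_le [OF assms] .
  have m1: "inf q (sup p (c q)) = p"
    using arg_cong [OF qp, of c] by (simp add: sup_commute)
  have m2: "inf (c p) (sup p (c q)) = c q"
    using arg_cong [OF pq, of c] by (simp add: sup_commute)
  have m3: "inf p (c q) = z"
    by (metis pp qq le(1,2) antisym c_antitone inf_mono inf_le1 le_inf_iff order_refl)
  have m4: "inf p (inf q (c p)) = z"
    by (metis pp inf.assoc inf.commute inf.absorb_iff2 le(2))
  have m5: "inf (inf q (c p)) (c q) = z"
    by (metis qq inf.assoc inf.commute inf.left_commute inf.absorb_iff2 le(2) c_le_c_iff)
  have m6: "inf (inf q (c p)) (sup p (c q)) = z"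
    using m2 qq by (simp add: inf.assoc)
  have le2: "z \<le> c q" "z \<le> c p" "p \<le> c z" "c p \<le> c z" "c q \<le> c z" "c q \<le> c p"
    "z \<le> inf q (c p)" "z \<le> sup p (c q)" "sup p (c q) \<le> c z" "z \<le> q" "z \<le> c z"
    "inf q (c p) \<le> c z"
    using le c_antitone [of q "c z"] c_antitone [of p "c z"]
    by (auto intro: order_trans le_supI1 le_supI2 le_infI1)
  note meets = pp qq m1 m2 m3 m4 m5 m6
  show "inf (cube z p q A B C) (cube z p q A' B' C') = cube z p q (A \<and> A') (B \<and> B') (C \<and> C')"
    unfolding cube_def
    by (cases A; cases B; cases C; cases A'; cases B'; cases C';
        simp add: inf_absorb1 inf_absorb2 meets meets [THEN trans [OF inf_commute]] le le2
          inf_commute [of "c p" q])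
  show "c (cube z p q A B C) = cube z p q (\<not> A) (\<not> B) (\<not> C)"
    unfolding cube_def by (cases A; cases B; cases C; simp add: inf_commute sup_commute)
qed

lemma cube_sup:
  assumes "splitting_chain z p q"
  shows "sup (cube z p q A B C) (cube z p q A' B' C') = cube z p q (A \<or> A') (B \<or> B') (C \<or> C')"
proof -
  have "sup (cube z p q A B C) (cube z p q A' B' C') =
      c (inf (c (cube z p q A B C)) (c (cube z p q A' B' C')))"
    by simp
  also have "\<dots> = cube z p q (A \<or> A') (B \<or> B') (C \<or> C')"
    unfolding cube_c [OF assms] cube_inf [OF assms] by simp
  finally show ?thesis .
qed

lemma cube_bounds:
  assumes "splitting_chain z p q"
  shows "z \<le> cube z p q A B C" and "cube z p q A B C \<le> c z"
proof -
  have lower: "z \<le> cube z p q A B C" for A B C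
  proof -
    have "z = inf (cube z p q A B C) (cube z p q (\<not> A) (\<not> B) (\<not> C))"
      unfolding cube_inf [OF assms] by (simp add: cube_def)
    then show ?thesis
      by (metis inf.cobounded1)
  qed
  then show "z \<le> cube z p q A B C" .
  show "cube z p q A B C \<le> c z"
    using lower [of "\<not> A" "\<not> B" "\<not> C"] unfolding cube_c [OF assms, symmetric]
    by (metis c_le_c_iff c_involutive)
qed

lemma boolean_local_gen_if_splitting_chain:
  assumes "splitting_chain (zero_xy c x y) p q"
  shows "boolean_local_sub c x y (local_gen c x y {p, q})"
proof -
  let ?z = "zero_xy c x y"
  define T where "T = {cube ?z p q A B C | A B C. True}"
  note cube_ops = cube_inf [OF assms] cube_sup [OF assms] cube_c [OF assms]
  have gens: "cube ?z p q True False False = p" "cube ?z p q True True False = q"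
    "cube ?z p q False False False = ?z" "cube ?z p q True True True = one_xy c x y"
    by (simp_all add: cube_def)
  have "local_gen c x y {p, q} \<subseteq> T"
  proof (rule local_gen_subset)
    have "cube ?z p q A B C \<in> T" for A B C
      unfolding T_def by blast
    then show "{p, q} \<subseteq> T" "?z \<in> T" "one_xy c x y \<in> T"
      by (metis gens empty_subsetI insert_subset)+
    show "inf u v \<in> T" "sup u v \<in> T" "c u \<in> T" if "u \<in> T" "v \<in> T" for u v
      using that unfolding T_def by (auto simp: cube_ops) blast+
  qed
  moreover have "T \<subseteq> local_carrier c x y"
    unfolding T_def local_carrier_def
    using cube_bounds [OF assms] by auto
  moreover have "inf u (sup v w) = sup (inf u v) (inf u w)" if "u \<in> T" "v \<in> T" "w \<in> T" for u v w
    using that unfolding T_def by (auto simp: cube_ops conj_disj_distribL)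
  moreover have "inf u (c u) = ?z" if "u \<in> T" for u
    using that unfolding T_def by (auto simp: cube_ops gens)
  ultimately show ?thesis
    by (rule boolean_local_sub_local_genI)
qed

lemma super_paraorthomodular_zero_xy:
  assumes "super_paraorthomodular c" "x \<le> y"
  shows "zero_xy c x y = inf (inf (c x) y) (sup x (c y))"
  using assms unfolding super_paraorthomodular_def zero_xy_def by (simp add: sup_commute)

lemma super_paraorthomodular_split:
  assumes sp: "super_paraorthomodular c"
    and "z \<le> u" "u \<le> v" "inf v (c v) = z"
    and small: "inf (inf v (c u)) (sup u (c v)) \<le> z"
  shows "sup u (inf v (c u)) = v"
proof -
  define w where "w = sup u (inf v (c u))"
  have "w \<le> v" "z \<le> w"
    unfolding w_def using assms(2,3) by (simp_all add: le_supI1)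
  have "v \<le> c z"
    unfolding assms(4) [symmetric] by simp
  then have "z \<le> c w"
    using \<open>w \<le> v\<close> by (metis c_le_c_iff c_involutive order_trans)
  have "inf (c w) v = inf (inf v (c u)) (sup u (c v))"
    unfolding w_def by (simp add: ac_simps)
  with small \<open>z \<le> c w\<close> \<open>z \<le> w\<close> \<open>w \<le> v\<close> have wv: "inf (c w) v = z"
    by (metis antisym le_inf_iff order_trans)
  moreover have ww: "inf w (c w) = z"
    using wv \<open>w \<le> v\<close> \<open>z \<le> w\<close> \<open>z \<le> c w\<close>
    by (metis antisym inf.commute inf_mono le_inf_iff order_refl)
  ultimately have "inf v (sup w (c w)) = sup w (inf v (c v))"
    using sp \<open>w \<le> v\<close> assms(4) unfolding super_paraorthomodular_def by simp
  moreover have "sup w (c w) = c z"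
    using arg_cong [OF ww, of c] by (simp add: sup_commute)
  ultimately have "v = w"
    using \<open>v \<le> c z\<close> \<open>z \<le> w\<close> assms(4) by (simp add: inf_absorb1 sup_absorb1)
  then show ?thesis
    unfolding w_def ..
qed

lemma super_paraorthomodular_splitting_chain:
  assumes sp: "super_paraorthomodular c" and "x \<le> y"
  shows "splitting_chain (zero_xy c x y) (sup x (inf y (c y))) (inf y (sup x (c x)))"
proof -
  define p q where "p = sup x (inf y (c y))" and "q = inf y (sup x (c x))"
  let ?z = "zero_xy c x y"
  have chain: "?z \<le> p" "p \<le> q" "q \<le> c ?z"
    unfolding p_def q_def using local_projections_chain [OF \<open>x \<le> y\<close>] by simp_all
  have "c y \<le> c x"
    using \<open>x \<le> y\<close> by simp
  have small: "t \<le> ?z" if "t \<le> c x" "t \<le> y" "t \<le> sup x (c y)" for t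
    using that unfolding super_paraorthomodular_zero_xy [OF assms] by simp
  have bounds: "c p \<le> c x" "q \<le> y" "p \<le> y" "c q \<le> c x" "p \<le> sup x (c y)" "c q \<le> sup x (c y)"
    unfolding p_def q_def using \<open>x \<le> y\<close> \<open>c y \<le> c x\<close> by (auto intro: le_supI1 le_supI2 le_infI1 le_infI2)
  have "?z \<le> c p" "?z \<le> c q"
    using chain by (metis c_le_c_iff c_involutive order_trans)+
  have pp: "inf p (c p) = ?z"
    using small [of "inf p (c p)"] bounds chain \<open>?z \<le> c p\<close>
    by (meson antisym inf.coboundedI1 inf.coboundedI2 le_inf_iff)
  have qq: "inf q (c q) = ?z"
    using small [of "inf q (c q)"] bounds chain \<open>?z \<le> c q\<close>
    by (meson antisym inf.coboundedI1 inf.coboundedI2 le_inf_iff order_trans)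
  have r: "inf (inf q (c p)) (sup p (c q)) \<le> ?z"
    using small bounds by (meson inf.coboundedI1 inf.coboundedI2 le_inf_iff le_sup_iff)
  have "sup p (inf q (c p)) = q"
    using super_paraorthomodular_split [OF sp chain(1,2) qq r] .
  moreover have "sup (c q) (inf (c p) (c (c q))) = c p"
  proof (rule super_paraorthomodular_split [OF sp \<open>?z \<le> c q\<close>])
    show "c q \<le> c p" "inf (c p) (c (c p)) = ?z"
      using chain(2) pp by (simp_all add: inf_commute)
    show "inf (inf (c p) (c (c q))) (sup (c q) (c (c p))) \<le> ?z"
      using r by (simp add: inf_commute sup_commute)
  qed
  ultimately show ?thesis
    using pp qq unfolding splitting_chain_def p_def [symmetric] q_def [symmetric]
    by (simp add: inf_commute)
qed

lemma boolean_local_gen_if_super_paraorthomodular: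
  assumes "super_paraorthomodular c" "x \<le> y"
  shows "boolean_local_sub c x y (local_gen c x y {proj c (zero_xy c x y) x, proj c (zero_xy c x y) y})"
  unfolding proj_zero_xy_left [OF \<open>x \<le> y\<close>] proj_zero_xy_right [OF \<open>x \<le> y\<close>]
  using boolean_local_gen_if_splitting_chain super_paraorthomodular_splitting_chain [OF assms] .

lemma paraorthomodular_law_if_boolean_local_sub:
  assumes "x \<le> y" and S: "boolean_local_sub c x y S"
    and P: "sup x (inf y (c y)) \<in> S" and Q: "inf y (sup x (c x)) \<in> S"
    and "inf (c x) y = zero_xy c x y"
  shows "inf y (sup x (c x)) = sup x (inf y (c y))"
proof -
  define p q where "p = sup x (inf y (c y))" and "q = inf y (sup x (c x))"
  let ?z = "zero_xy c x y"
  have "c p \<in> S" "inf q (c p) \<in> S"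
    using S P Q unfolding boolean_local_sub_def p_def q_def by blast+
  then have "?z \<le> inf q (c p)"
    using S unfolding boolean_local_sub_def local_carrier_def by blast
  moreover have "inf q (c p) \<le> inf (c x) y"
    unfolding p_def q_def by (simp add: le_infI1 le_infI2)
  ultimately have r: "inf q (c p) = ?z"
    using assms(5) by (metis antisym)
  have "inf p (c p) = ?z"
    using S P unfolding boolean_local_sub_def p_def by blast
  have "p \<le> q" "q \<le> one_xy c x y"
    using local_projections_chain [OF \<open>x \<le> y\<close>] unfolding p_def q_def by simp_all
  then have "q = inf q (sup p (c p))"
    using arg_cong [OF \<open>inf p (c p) = ?z\<close>, of c] by (simp add: sup_commute inf_absorb1)
  also have "\<dots> = sup (inf q p) (inf q (c p))"
    using S P Q \<open>c p \<in> S\<close> unfolding boolean_local_sub_def p_def q_def by blast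
  also have "\<dots> = p"
    using r \<open>p \<le> q\<close> local_projections_chain(1) [OF \<open>x \<le> y\<close>]
    by (simp add: inf_absorb2 sup_absorb1 p_def)
  finally show ?thesis
    unfolding p_def q_def .
qed

lemma zero_xy_eq_if_boolean_local_sub:
  assumes "x \<le> y" and S: "boolean_local_sub c x y S"
    and P: "sup x (inf y (c y)) \<in> S" and Q: "inf y (sup x (c x)) \<in> S"
  shows "zero_xy c x y = inf (inf (c x) y) (sup x (c y))"
proof (rule antisym)
  have "c y \<le> c x"
    using \<open>x \<le> y\<close> by simp
  then show "zero_xy c x y \<le> inf (inf (c x) y) (sup x (c y))"
    unfolding zero_xy_def using \<open>x \<le> y\<close>
    by (auto intro: le_infI1 le_infI2 le_supI1 le_supI2 order_trans)
  define r where "r = inf (inf y (sup x (c x))) (c (sup x (inf y (c y))))"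
  have "r \<in> S"
    using S P Q unfolding boolean_local_sub_def r_def by blast
  then have "inf r (c r) = zero_xy c x y"
    using S unfolding boolean_local_sub_def by blast
  moreover have "inf (inf (c x) y) (sup x (c y)) \<le> r"
    unfolding r_def using \<open>c y \<le> c x\<close> by (auto intro: le_infI1 le_infI2 le_supI1 le_supI2)
  moreover have "sup x (c y) \<le> c r"
    unfolding r_def by simp (meson le_supI le_supI1 le_supI2 order_refl)
  then have "inf (inf (c x) y) (sup x (c y)) \<le> c r"
    by (simp add: le_infI2)
  ultimately show "inf (inf (c x) y) (sup x (c y)) \<le> zero_xy c x y"
    by (metis le_inf_iff)
qed

lemma super_paraorthomodular_if_boolean_local_gen:
  assumes "\<And>x y. x \<le> y \<Longrightarrow>
    boolean_local_sub c x y (local_gen c x y {proj c (zero_xy c x y) x, proj c (zero_xy c x y) y})"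
  shows "super_paraorthomodular c"
proof -
  let ?S = "\<lambda>x y. local_gen c x y {proj c (zero_xy c x y) x, proj c (zero_xy c x y) y}"
  have gens: "sup x (inf y (c y)) \<in> ?S x y" "inf y (sup x (c x)) \<in> ?S x y" if "x \<le> y" for x y
    unfolding proj_zero_xy_left [OF that, symmetric] proj_zero_xy_right [OF that, symmetric]
    by (simp_all add: local_gen.gen)
  show ?thesis
    unfolding super_paraorthomodular_def
  proof (intro conjI allI impI)
    fix x y :: 'a
    assume "x \<le> y \<and> inf (c x) y = sup (inf x (c x)) (inf y (c y))"
    then show "inf y (sup x (c x)) = sup x (inf y (c y))"
      using paraorthomodular_law_if_boolean_local_sub [OF _ assms gens] by (simp add: zero_xy_def)
  next
    fix x y :: 'a
    assume "x \<le> y"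
    then show "sup (inf x (c x)) (inf y (c y)) = inf (inf (c x) y) (c (inf (c x) y))"
      using zero_xy_eq_if_boolean_local_sub [OF _ assms gens] by (simp add: zero_xy_def)
  qed
qed

end

theorem lemma4p8:
  fixes c :: "'a::bounded_lattice \<Rightarrow> 'a"
  assumes "pseudo_kleene c"
  shows "super_paraorthomodular c \<longleftrightarrow>
    (\<forall>x y. x \<le> y \<longrightarrow>
       boolean_local_sub c x y
         (local_gen c x y {proj c (zero_xy c x y) x, proj c (zero_xy c x y) y}))"
proof -
  interpret pseudo_kleene_lattice c
    using assms by (rule pseudo_kleene_lattice.intro)
  show ?thesis
    using boolean_local_gen_if_super_paraorthomodular super_paraorthomodular_if_boolean_local_gen
    by blast
qed

end
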